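(* The block-asynchronous linear iteration for solving the lower block triangular system $\mathbf{Lx}=\mathbf{b}$ converges in a finite number of steps to the solution $\mathbf{L}^{-1}\mathbf{b}$.
   Context: $\mathbf{L}\in\mathbb{R}^{n\times n}$ is lower block triangular with square $b\times b$ blocks ($n$ divisible by $b$, $n/b$ blocks) and nonsingular diagonal blocks, split as $\mathbf{L}=\mathbf{D}+\tilde{\mathbf{L}}$ with $\mathbf{D}$ block diagonal and $\tilde{\mathbf{L}}$ strictly lower block triangular. Let $\boldsymbol{\psi}(\mathbf{x}):=\mathbf{D}^{-1}\mathbf{b}-\mathbf{D}^{-1}\tilde{\mathbf{L}}\mathbf{x}$, and denote by $\mathbf{x}_i$, $\boldsymbol{\psi}_i$ the $i$th sub-vector of length $b$. The block-asynchronous iteration is $\mathbf{x}_i^{j+1}=\mathbf{x}_i^j$ if $i\neq u(j)$ and $\mathbf{x}_i^{j+1}=\boldsymbol{\psi}_i(x_1^{j-s_1(j)},\dots,x_n^{j-s_n(j)})$ if $i=u(j)$, where the shift functions $s_\alpha:\mathbb{N}\to\mathbb{N}$ ($\alpha=1,\dots,n$) satisfy $0\le s_\alpha(j)\le\min\{j-1,\hat s\}$ for some fixed $\hat s\in\mathbb{N}$, and the update function $u:\mathbb{N}\to\{1,\dots,n/b\}$ satisfies: for every $i\in\{1,\dots,n/b\}$ and $j\in\mathbb{N}$ there exists $l>j$ with $u(l)=i$. *)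

theory Defs
  imports "Jordan_Normal_Form.Matrix"
begin

(* Conventions: indices are 0-based; block I (0 \<le> I < n div bs) consists of rows/columns
   I*bs, ..., I*bs + bs - 1.  Block size is bs (the paper's b); right-hand side is bv. *)

definition lower_block_triangular :: "nat \<Rightarrow> real mat \<Rightarrow> bool" where
  "lower_block_triangular bs L \<longleftrightarrow>
     (\<forall>i < dim_row L. \<forall>k < dim_col L. i div bs < k div bs \<longrightarrow> L $$ (i, k) = 0)"

definition diag_block :: "nat \<Rightarrow> real mat \<Rightarrow> nat \<Rightarrow> real mat" where
  "diag_block bs L I = mat bs bs (\<lambda>(p, q). L $$ (I * bs + p, I * bs + q))"

definition block_diag_part :: "nat \<Rightarrow> real mat \<Rightarrow> real mat" where
  "block_diag_part bs L = mat (dim_row L) (dim_col L)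
     (\<lambda>(i, k). if i div bs = k div bs then L $$ (i, k) else 0)"

definition strict_lower_part :: "nat \<Rightarrow> real mat \<Rightarrow> real mat" where
  "strict_lower_part bs L = mat (dim_row L) (dim_col L)
     (\<lambda>(i, k). if k div bs < i div bs then L $$ (i, k) else 0)"

definition mat_inv :: "real mat \<Rightarrow> real mat" where
  "mat_inv A = (SOME B. inverts_mat A B \<and> inverts_mat B A)"

definition psi :: "nat \<Rightarrow> real mat \<Rightarrow> real vec \<Rightarrow> real vec \<Rightarrow> real vec" where
  "psi bs L bv z = mat_inv (block_diag_part bs L) *\<^sub>v bv
                   - mat_inv (block_diag_part bs L) *\<^sub>v (strict_lower_part bs L *\<^sub>v z)"

end

theory Submission
  imports Defs "Jordan_Normal_Form.Determinant"
begin

text \<open>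
  Let \<open>y = L\<inverse> b\<close>. As \<open>D\<close> is block diagonal and \<open>L - D\<close> is strictly lower block
  triangular, block \<open>I\<close> of \<open>\<psi>(z)\<close> agrees with block \<open>I\<close> of \<open>y\<close> as soon as the blocks
  before \<open>I\<close> of \<open>z\<close> agree with those of \<open>y\<close>. Now induct on \<open>I\<close>: once the blocks before \<open>I\<close>
  of the iterates are exact from time \<open>J\<close> on, every read after time \<open>J + s_hat\<close> sees exact
  values there. Hence the first update of block \<open>I\<close> after that time makes it exact, and
  every later update recomputes the same value.
\<close>

lemma block_index_bounds:
  fixes bs n I q :: nat
  assumes "I < n div bs" and "q < bs"
  shows "I * bs + q < n" and "(I * bs + q) div bs = I"
proof -
  have "Suc I * bs \<le> n div bs * bs"
    using assms(1) by (intro mult_le_mono1) simp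
  also have "\<dots> \<le> n" by simp
  finally show "I * bs + q < n" using assms(2) by simp
  show "(I * bs + q) div bs = I" using assms(2) by simp
qed

lemma block_div_less:
  fixes bs n k :: nat
  assumes "bs dvd n" and "k < n"
  shows "k div bs < n div bs"
proof -
  obtain c where "n = bs * c" using assms(1) by blast
  with assms(2) show ?thesis
    by (metis less_mult_imp_div_less mult.commute mult_zero_left not_less_zero
        nonzero_mult_div_cancel_left)
qed

lemma block_induct:
  fixes bs n N :: nat
  assumes step: "\<And>I k. I < N \<Longrightarrow> \<forall>k'<n. k' div bs < I \<longrightarrow> P k' \<Longrightarrow>
                   k < n \<Longrightarrow> k div bs = I \<Longrightarrow> P k"
  shows "\<forall>k<n. k div bs < N \<longrightarrow> P k"
proof -
  have "\<forall>k<n. k div bs = I \<longrightarrow> P k" if "I < N" for I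
    using that
  proof (induction I rule: less_induct)
    case (less I)
    have below: "\<forall>k'<n. k' div bs < I \<longrightarrow> P k'"
      using less.IH less.prems by auto
    show ?case using step[OF less.prems below] by blast
  qed
  then show ?thesis by blast
qed

lemma sum_lessThan_block:
  fixes f :: "nat \<Rightarrow> 'a :: comm_monoid_add"
  assumes I: "I < n div bs" and outside: "\<And>k. k < n \<Longrightarrow> k div bs \<noteq> I \<Longrightarrow> f k = 0"
  shows "(\<Sum>k<n. f k) = (\<Sum>q<bs. f (I * bs + q))"
proof -
  have "(\<Sum>k<n. f k) = (\<Sum>k\<in>(\<lambda>q. I * bs + q) ` {..<bs}. f k)"
  proof (rule sum.mono_neutral_right)
    show "(\<lambda>q. I * bs + q) ` {..<bs} \<subseteq> {..<n}"
      using block_index_bounds(1)[OF I] by auto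
    show "\<forall>k\<in>{..<n} - (\<lambda>q. I * bs + q) ` {..<bs}. f k = 0"
    proof
      fix k assume k: "k \<in> {..<n} - (\<lambda>q. I * bs + q) ` {..<bs}"
      have "bs > 0" using I by (cases "bs = 0") auto
      have "k \<in> (\<lambda>q. I * bs + q) ` {..<bs}" if "k div bs = I"
      proof (rule image_eqI)
        show "k = I * bs + k mod bs" using div_mult_mod_eq[of k bs] that by simp
        show "k mod bs \<in> {..<bs}" using \<open>bs > 0\<close> by simp
      qed
      then show "f k = 0" using k outside by blast
    qed
  qed simp
  also have "\<dots> = (\<Sum>q<bs. f (I * bs + q))"
    by (simp add: sum.reindex)
  finally show ?thesis .
qed

definition block_vec :: "nat \<Rightarrow> 'a vec \<Rightarrow> nat \<Rightarrow> 'a vec" where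
  "block_vec bs v I = vec bs (\<lambda>q. v $ (I * bs + q))"

lemma mult_mat_vec_block_row:
  fixes M :: "real mat"
  assumes M: "M \<in> carrier_mat n n" and v: "v \<in> carrier_vec n"
    and I: "I < n div bs" and p: "p < bs"
    and off: "\<And>k. k < n \<Longrightarrow> k div bs \<noteq> I \<Longrightarrow> M $$ (I * bs + p, k) * v $ k = 0"
  shows "(M *\<^sub>v v) $ (I * bs + p) = (diag_block bs M I *\<^sub>v block_vec bs v I) $ p"
proof -
  have r: "I * bs + p < n" using block_index_bounds(1)[OF I p] .
  have "(M *\<^sub>v v) $ (I * bs + p) = (\<Sum>k<n. M $$ (I * bs + p, k) * v $ k)"
    using M v r by (simp add: scalar_prod_def atLeast0LessThan)
  also have "\<dots> = (\<Sum>q<bs. M $$ (I * bs + p, I * bs + q) * v $ (I * bs + q))"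
    using off by (rule sum_lessThan_block[OF I])
  also have "\<dots> = (diag_block bs M I *\<^sub>v block_vec bs v I) $ p"
    using p by (simp add: diag_block_def block_vec_def scalar_prod_def atLeast0LessThan)
  finally show ?thesis .
qed

lemma invertible_mat_mult_vec_eq_zero:
  fixes A :: "'a :: comm_ring_1 mat"
  assumes "invertible_mat A" and "A \<in> carrier_mat n n" and "w \<in> carrier_vec n"
    and "A *\<^sub>v w = 0\<^sub>v n"
  shows "w = 0\<^sub>v n"
proof -
  obtain B where AB: "inverts_mat A B" and BA: "inverts_mat B A"
    using assms(1) unfolding invertible_mat_def by blast
  have "A * B = 1\<^sub>m n" using AB assms(2) by (simp add: inverts_mat_def)
  then have "dim_col B = n" by (metis index_mult_mat(3) index_one_mat(3))
  have BA': "B * A = 1\<^sub>m (dim_row B)" using BA by (simp add: inverts_mat_def)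
  then have "dim_row B = n" using assms(2) by (metis carrier_matD(2) index_mult_mat(3) index_one_mat(3))
  with \<open>dim_col B = n\<close> have B: "B \<in> carrier_mat n n" by auto
  have "w = (B * A) *\<^sub>v w" using BA' B assms(3) by simp
  also have "\<dots> = B *\<^sub>v 0\<^sub>v n" using B assms(2-4) by simp
  also have "\<dots> = 0\<^sub>v n" using B by auto
  finally show ?thesis .
qed

lemma invertible_mat_if_trivial_kernel:
  fixes A :: "'a :: field mat"
  assumes A: "A \<in> carrier_mat n n"
    and kernel: "\<And>v. v \<in> carrier_vec n \<Longrightarrow> A *\<^sub>v v = 0\<^sub>v n \<Longrightarrow> v = 0\<^sub>v n"
  shows "invertible_mat A"
proof -
  have "det A \<noteq> 0" using det_0_iff_vec_prod_zero_field[OF A] kernel by blast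
  from det_non_zero_imp_unit[OF A this, of "()"]
  obtain B where "B \<in> carrier_mat n n" "B * A = 1\<^sub>m n" "A * B = 1\<^sub>m n"
    unfolding Units_def ring_mat_def by auto
  with A have "inverts_mat A B" "inverts_mat B A"
    by (simp_all add: inverts_mat_def)
  moreover have "square_mat A" using A by simp
  ultimately show ?thesis
    unfolding invertible_mat_def by blast
qed

lemma mat_inv_right_inverse:
  assumes "A \<in> carrier_mat n n" and "invertible_mat A"
  shows "mat_inv A \<in> carrier_mat n n" and "A * mat_inv A = 1\<^sub>m n"
proof -
  have "\<exists>B. inverts_mat A B \<and> inverts_mat B A"
    using assms(2) unfolding invertible_mat_def by blast
  then have "inverts_mat A (mat_inv A) \<and> inverts_mat (mat_inv A) A"
    unfolding mat_inv_def by (rule someI_ex)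
  then have AB: "A * mat_inv A = 1\<^sub>m n"
    and BA: "mat_inv A * A = 1\<^sub>m (dim_row (mat_inv A))"
    using assms(1) unfolding inverts_mat_def by auto
  show "mat_inv A \<in> carrier_mat n n"
    using arg_cong[OF AB, of dim_col] arg_cong[OF BA, of dim_col] assms(1) by auto
  show "A * mat_inv A = 1\<^sub>m n" by (fact AB)
qed

lemma mult_mat_vec_mat_inv:
  assumes "A \<in> carrier_mat n n" and "invertible_mat A" and "v \<in> carrier_vec n"
  shows "A *\<^sub>v (mat_inv A *\<^sub>v v) = v"
proof -
  note inv = mat_inv_right_inverse[OF assms(1,2)]
  have "A *\<^sub>v (mat_inv A *\<^sub>v v) = (A * mat_inv A) *\<^sub>v v"
    using inv(1) assms by simp
  also have "\<dots> = v" using inv(2) assms(3) by simp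
  finally show ?thesis .
qed

lemma block_eq_zero_if_mult_mat_vec_block_eq_zero:
  fixes M :: "real mat"
  assumes M: "M \<in> carrier_mat n n" and v: "v \<in> carrier_vec n" and I: "I < n div bs"
    and inv: "invertible_mat (diag_block bs M I)"
    and off: "\<And>r k. r < n \<Longrightarrow> k < n \<Longrightarrow> r div bs = I \<Longrightarrow> k div bs \<noteq> I \<Longrightarrow>
                M $$ (r, k) * v $ k = 0"
    and zero: "\<And>r. r < n \<Longrightarrow> r div bs = I \<Longrightarrow> (M *\<^sub>v v) $ r = 0"
    and r: "r < n" "r div bs = I"
  shows "v $ r = 0"
proof -
  have "diag_block bs M I *\<^sub>v block_vec bs v I = 0\<^sub>v bs"
  proof (rule eq_vecI)
    fix p assume "p < dim_vec (0\<^sub>v bs :: real vec)"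
    then have p: "p < bs" by simp
    note q = block_index_bounds[OF I p]
    show "(diag_block bs M I *\<^sub>v block_vec bs v I) $ p = 0\<^sub>v bs $ p"
      using mult_mat_vec_block_row[OF M v I p] off[OF q(1) _ q(2)] zero[OF q] p by simp
  qed (simp add: diag_block_def)
  then have block_zero: "block_vec bs v I = 0\<^sub>v bs"
    using invertible_mat_mult_vec_eq_zero[OF inv] by (simp add: diag_block_def block_vec_def)
  have "bs > 0" using I by (cases "bs = 0") auto
  then have q: "r mod bs < bs" by simp
  have "r = I * bs + r mod bs" using div_mult_mod_eq[of r bs] r(2) by simp
  then have "v $ r = block_vec bs v I $ (r mod bs)"
    using q by (simp add: block_vec_def)
  then show ?thesis using block_zero q by simp
qed

lemma lower_block_triangular_kernel:
  assumes dvd: "bs dvd n" and M: "M \<in> carrier_mat n n"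
    and lbt: "lower_block_triangular bs M"
    and inv: "\<forall>I < n div bs. invertible_mat (diag_block bs M I)"
    and v: "v \<in> carrier_vec n" and Mv: "M *\<^sub>v v = 0\<^sub>v n"
  shows "v = 0\<^sub>v n"
proof -
  have blocks: "\<forall>k<n. k div bs < n div bs \<longrightarrow> v $ k = 0"
  proof (rule block_induct)
    fix I k assume I: "I < n div bs" and below: "\<forall>k'<n. k' div bs < I \<longrightarrow> v $ k' = 0"
      and k: "k < n" "k div bs = I"
    show "v $ k = 0"
    proof (rule block_eq_zero_if_mult_mat_vec_block_eq_zero[OF M v I inv[rule_format, OF I] _ _ k])
      fix r k' assume rk: "r < n" "k' < n" "r div bs = I" "k' div bs \<noteq> I"
      show "M $$ (r, k') * v $ k' = 0"
      proof (cases "k' div bs < I")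
        case True
        then show ?thesis using below rk by simp
      next
        case False
        then have "r div bs < k' div bs" using rk by simp
        moreover have "dim_row M = n" "dim_col M = n" using M by auto
        ultimately have "M $$ (r, k') = 0"
          using lbt rk(1,2) unfolding lower_block_triangular_def by simp
        then show ?thesis by simp
      qed
    next
      fix r assume "r < n"
      then show "(M *\<^sub>v v) $ r = 0" using Mv by simp
    qed
  qed
  show ?thesis
  proof (rule eq_vecI)
    fix k assume "k < dim_vec (0\<^sub>v n :: real vec)"
    then have "k < n" by simp
    then show "v $ k = 0\<^sub>v n $ k" using blocks block_div_less[OF dvd \<open>k < n\<close>] by simp
  qed (use v in simp)
qed

lemma lower_block_triangular_invertible:
  assumes "bs dvd n" and "M \<in> carrier_mat n n" and "lower_block_triangular bs M"
    and "\<forall>I < n div bs. invertible_mat (diag_block bs M I)"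
  shows "invertible_mat M"
  by (rule invertible_mat_if_trivial_kernel[OF assms(2)])
    (rule lower_block_triangular_kernel[OF assms])

lemma dim_block_diag_part [simp]:
  "dim_row (block_diag_part bs L) = dim_row L" "dim_col (block_diag_part bs L) = dim_col L"
  by (simp_all add: block_diag_part_def)

lemma dim_strict_lower_part [simp]:
  "dim_row (strict_lower_part bs L) = dim_row L" "dim_col (strict_lower_part bs L) = dim_col L"
  by (simp_all add: strict_lower_part_def)

lemma lower_block_triangular_block_diag_part:
  "lower_block_triangular bs (block_diag_part bs L)"
  unfolding lower_block_triangular_def block_diag_part_def by auto

lemma diag_block_block_diag_part:
  assumes "L \<in> carrier_mat n n" and "I < n div bs"
  shows "diag_block bs (block_diag_part bs L) I = diag_block bs L I"
  using assms block_index_bounds[OF assms(2)]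
  by (intro eq_matI) (auto simp: diag_block_def block_diag_part_def)

lemma block_diag_part_add_strict_lower_part:
  assumes "L \<in> carrier_mat n n" and "lower_block_triangular bs L"
  shows "block_diag_part bs L + strict_lower_part bs L = L"
proof (rule eq_matI)
  fix i j assume "i < dim_row L" "j < dim_col L"
  with assms show "(block_diag_part bs L + strict_lower_part bs L) $$ (i, j) = L $$ (i, j)"
    unfolding lower_block_triangular_def
    by (cases "i div bs" "j div bs" rule: linorder_cases)
      (auto simp: block_diag_part_def strict_lower_part_def)
qed (use assms in auto)

lemma block_diag_part_invertible:
  assumes "bs dvd n" and L: "L \<in> carrier_mat n n"
    and diag_inv: "\<forall>I < n div bs. invertible_mat (diag_block bs L I)"
  shows "invertible_mat (block_diag_part bs L)"
proof (rule lower_block_triangular_invertible[OF assms(1)])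
  show "block_diag_part bs L \<in> carrier_mat n n" using L by auto
  show "lower_block_triangular bs (block_diag_part bs L)"
    by (rule lower_block_triangular_block_diag_part)
  show "\<forall>I < n div bs. invertible_mat (diag_block bs (block_diag_part bs L) I)"
    using diag_inv diag_block_block_diag_part[OF L] by simp
qed

lemma strict_lower_part_mult_vec_block:
  assumes L: "L \<in> carrier_mat n n" and z: "z \<in> carrier_vec n" and y: "y \<in> carrier_vec n"
    and agree: "\<forall>k<n. k div bs < I \<longrightarrow> z $ k = y $ k"
    and r: "r < n" "r div bs = I"
  shows "(strict_lower_part bs L *\<^sub>v z) $ r = (strict_lower_part bs L *\<^sub>v y) $ r"
proof -
  have expand: "(strict_lower_part bs L *\<^sub>v w) $ r = (\<Sum>k<n. strict_lower_part bs L $$ (r, k) * w $ k)"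
    if "w \<in> carrier_vec n" for w
    using that L r by (simp add: scalar_prod_def atLeast0LessThan)
  have "strict_lower_part bs L $$ (r, k) * z $ k = strict_lower_part bs L $$ (r, k) * y $ k"
    if "k < n" for k
    using that agree r L by (simp add: strict_lower_part_def)
  then show ?thesis
    unfolding expand[OF z] expand[OF y] by (intro sum.cong) simp_all
qed

lemma psi_block_eq_solution:
  assumes dvd: "bs dvd n" and L: "L \<in> carrier_mat n n"
    and lbt: "lower_block_triangular bs L"
    and diag_inv: "\<forall>I < n div bs. invertible_mat (diag_block bs L I)"
    and y: "y \<in> carrier_vec n" and Ly: "L *\<^sub>v y = bv"
    and I: "I < n div bs" and z: "z \<in> carrier_vec n"
    and agree: "\<forall>k<n. k div bs < I \<longrightarrow> z $ k = y $ k"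
    and r: "r < n" "r div bs = I"
  shows "psi bs L bv z $ r = y $ r"
proof -
  define D where "D = block_diag_part bs L"
  define Lt where "Lt = strict_lower_part bs L"
  define w where "w = psi bs L bv z"
  have D: "D \<in> carrier_mat n n" and Lt: "Lt \<in> carrier_mat n n"
    using L by (auto simp: D_def Lt_def)
  have D_inv: "invertible_mat D"
    unfolding D_def using block_diag_part_invertible[OF dvd L diag_inv] .
  have bv: "bv \<in> carrier_vec n" using Ly L y by auto
  have w: "w \<in> carrier_vec n"
    using mat_inv_right_inverse[OF D D_inv] Lt bv z
    unfolding w_def psi_def D_def[symmetric] Lt_def[symmetric] by simp
  have Dw: "D *\<^sub>v w = bv - Lt *\<^sub>v z"
    using mat_inv_right_inverse[OF D D_inv] D Lt bv z
    unfolding w_def psi_def D_def[symmetric] Lt_def[symmetric]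
    by (simp add: mult_minus_distrib_mat_vec mult_mat_vec_mat_inv[OF D D_inv])
  have "bv = D *\<^sub>v y + Lt *\<^sub>v y"
    using block_diag_part_add_strict_lower_part[OF L lbt] Ly add_mult_distrib_mat_vec[OF D Lt y]
    by (simp add: D_def Lt_def)
  then have Dy: "(D *\<^sub>v y) $ i = bv $ i - (Lt *\<^sub>v y) $ i" if "i < n" for i
    using that D Lt by simp
  have "(w - y) $ r = 0"
  proof (rule block_eq_zero_if_mult_mat_vec_block_eq_zero[OF D _ I _ _ _ r])
    show "invertible_mat (diag_block bs D I)"
      using diag_block_block_diag_part[OF L I] diag_inv I by (simp add: D_def)
    show "w - y \<in> carrier_vec n" using w y by simp
    show "D $$ (r', k) * (w - y) $ k = 0" if "r' < n" "k < n" "r' div bs = I" "k div bs \<noteq> I"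
      for r' k
      using that L by (simp add: D_def block_diag_part_def)
    show "(D *\<^sub>v (w - y)) $ r' = 0" if r': "r' < n" "r' div bs = I" for r'
    proof -
      have "(D *\<^sub>v (w - y)) $ r' = (D *\<^sub>v w) $ r' - (D *\<^sub>v y) $ r'"
        using mult_minus_distrib_mat_vec[OF D w y] r' D by simp
      also have "\<dots> = (Lt *\<^sub>v y) $ r' - (Lt *\<^sub>v z) $ r'"
        using Dw Dy[OF r'(1)] r' bv Lt by simp
      also have "\<dots> = 0"
        using strict_lower_part_mult_vec_block[OF L z y agree r'] by (simp add: Lt_def)
      finally show ?thesis .
    qed
  qed
  then show ?thesis using r w y by (simp add: w_def)
qed

definition async_block_iteration ::
    "nat \<Rightarrow> nat \<Rightarrow> ('a vec \<Rightarrow> 'a vec) \<Rightarrow> (nat \<Rightarrow> nat \<Rightarrow> nat) \<Rightarrow> (nat \<Rightarrow> nat) \<Rightarrow> (nat \<Rightarrow> 'a vec) \<Rightarrow> bool"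
  where "async_block_iteration n bs F s u x \<longleftrightarrow>
    (\<forall>j \<ge> 1. x (Suc j) = vec n (\<lambda>\<alpha>.
       if \<alpha> div bs = u j then F (vec n (\<lambda>\<beta>. x (j - s \<beta> j) $ \<beta>)) $ \<alpha> else x j $ \<alpha>))"

lemma async_block_iteration_block_settles:
  fixes x :: "nat \<Rightarrow> 'a vec" and F :: "'a vec \<Rightarrow> 'a vec"
  assumes F_block: "\<And>z k. z \<in> carrier_vec n \<Longrightarrow> \<forall>k'<n. k' div bs < I \<longrightarrow> z $ k' = y $ k' \<Longrightarrow>
                      k < n \<Longrightarrow> k div bs = I \<Longrightarrow> F z $ k = y $ k"
    and shift: "\<And>\<alpha> j. \<alpha> < n \<Longrightarrow> 1 \<le> j \<Longrightarrow> s \<alpha> j \<le> s_hat"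
    and iter: "async_block_iteration n bs F s u x"
    and settled: "\<And>j k. J \<le> j \<Longrightarrow> k < n \<Longrightarrow> k div bs < I \<Longrightarrow> x j $ k = y $ k"
    and l: "J + s_hat < l" "u l = I"
    and j: "l < j" and k: "k < n" "k div bs = I"
  shows "x j $ k = y $ k"
proof -
  have update: "x (Suc j) $ k = y $ k"
    if j: "l \<le> j" and prev: "u j = I \<or> x j $ k = y $ k" for j
  proof -
    define z where "z = vec n (\<lambda>\<beta>. x (j - s \<beta> j) $ \<beta>)"
    have j1: "1 \<le> j" using j l by simp
    have z: "z \<in> carrier_vec n" by (simp add: z_def)
    have "\<forall>k'<n. k' div bs < I \<longrightarrow> z $ k' = y $ k'"
    proof (intro allI impI)
      fix k' assume k': "k' < n" "k' div bs < I"
      have "s k' j \<le> s_hat" using shift[OF k'(1) j1] .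
      then have "J \<le> j - s k' j" using j l by linarith
      then show "z $ k' = y $ k'" using settled[OF _ k'] k'(1) by (simp add: z_def)
    qed
    then have "F z $ k = y $ k" using F_block[OF z _ k] by blast
    moreover have "x (Suc j) $ k = (if u j = I then F z $ k else x j $ k)"
      using iter j1 k unfolding async_block_iteration_def by (simp add: z_def)
    ultimately show ?thesis using prev by (cases "u j = I") simp_all
  qed
  show ?thesis
    using Suc_leI[OF j]
  proof (induction j rule: dec_induct)
    case base
    show ?case using update[of l] l by simp
  next
    case (step j)
    then show ?case using update[of j] by simp
  qed
qed

lemma async_block_iteration_converges:
  fixes x :: "nat \<Rightarrow> 'a vec" and F :: "'a vec \<Rightarrow> 'a vec"
  assumes F_block: "\<And>I z k. I < N \<Longrightarrow> z \<in> carrier_vec n \<Longrightarrow>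
                      \<forall>k'<n. k' div bs < I \<longrightarrow> z $ k' = y $ k' \<Longrightarrow>
                      k < n \<Longrightarrow> k div bs = I \<Longrightarrow> F z $ k = y $ k"
    and shift: "\<And>\<alpha> j. \<alpha> < n \<Longrightarrow> 1 \<le> j \<Longrightarrow> s \<alpha> j \<le> s_hat"
    and u_inf: "\<forall>I < N. \<forall>j \<ge> 1. \<exists>l > j. u l = I"
    and iter: "async_block_iteration n bs F s u x"
  shows "\<exists>J. \<forall>j \<ge> J. \<forall>k<n. k div bs < N \<longrightarrow> x j $ k = y $ k"
proof -
  have "\<exists>J. \<forall>j \<ge> J. \<forall>k<n. k div bs < I \<longrightarrow> x j $ k = y $ k" if "I \<le> N" for I
    using that
  proof (induction I)
    case 0
    show ?case by simp
  next
    case (Suc I)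
    then have I: "I < N" by simp
    from Suc obtain J where J: "\<And>j k. J \<le> j \<Longrightarrow> k < n \<Longrightarrow> k div bs < I \<Longrightarrow> x j $ k = y $ k"
      by auto
    have "\<exists>l > Suc (J + s_hat). u l = I" using u_inf I by simp
    then obtain l where "Suc (J + s_hat) < l" and "u l = I" by blast
    then have l: "J + s_hat < l" "u l = I" by simp_all
    have "x j $ k = y $ k" if "Suc l \<le> j" "k < n" "k div bs < Suc I" for j k
    proof (cases "k div bs < I")
      case True
      have "J \<le> j" using that(1) l(1) by linarith
      then show ?thesis using J that(2) True by blast
    next
      case False
      with that(3) have "k div bs = I" by simp
      moreover have "l < j" using that(1) by simp
      ultimately show ?thesis
        using async_block_iteration_block_settles[OF F_block[OF I] shift iter J l _ that(2)] by blast
    qed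
    then show ?case by blast
  qed
  then show ?thesis by blast
qed

lemma async_block_iteration_carrier:
  assumes iter: "async_block_iteration n bs F s u x" and x_init: "x 1 \<in> carrier_vec n"
    and "1 \<le> j"
  shows "x j \<in> carrier_vec n"
  using \<open>1 \<le> j\<close>
proof (induction j rule: dec_induct)
  case base
  show ?case by (fact x_init)
next
  case (step j)
  then show ?case using iter unfolding async_block_iteration_def by simp
qed

lemma async_block_iteration_eventually_eq:
  fixes x :: "nat \<Rightarrow> 'a vec" and F :: "'a vec \<Rightarrow> 'a vec"
  assumes dvd: "bs dvd n"
    and F_block: "\<And>I z k. I < n div bs \<Longrightarrow> z \<in> carrier_vec n \<Longrightarrow>
                      \<forall>k'<n. k' div bs < I \<longrightarrow> z $ k' = y $ k' \<Longrightarrow>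
                      k < n \<Longrightarrow> k div bs = I \<Longrightarrow> F z $ k = y $ k"
    and shift: "\<And>\<alpha> j. \<alpha> < n \<Longrightarrow> 1 \<le> j \<Longrightarrow> s \<alpha> j \<le> s_hat"
    and u_inf: "\<forall>I < n div bs. \<forall>j \<ge> 1. \<exists>l > j. u l = I"
    and iter: "async_block_iteration n bs F s u x"
    and x_init: "x 1 \<in> carrier_vec n" and y: "y \<in> carrier_vec n"
  shows "\<exists>J \<ge> 1. \<forall>j \<ge> J. x j = y"
proof -
  have "\<exists>J. \<forall>j \<ge> J. \<forall>k<n. k div bs < n div bs \<longrightarrow> x j $ k = y $ k"
    by (rule async_block_iteration_converges[OF F_block shift u_inf iter])
  then obtain J where J: "\<forall>j \<ge> J. \<forall>k<n. k div bs < n div bs \<longrightarrow> x j $ k = y $ k"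
    by blast
  have "x j = y" if "Suc J \<le> j" for j
  proof (rule eq_vecI)
    show "dim_vec (x j) = dim_vec y"
      using async_block_iteration_carrier[OF iter x_init, of j] y that by simp
    fix k assume "k < dim_vec y"
    then have "k < n" using y by simp
    then show "x j $ k = y $ k" using J that block_div_less[OF dvd \<open>k < n\<close>] by simp
  qed
  then show ?thesis by (intro exI[of _ "Suc J"] conjI allI impI) simp_all
qed

theorem theorem4:
  fixes n bs :: nat and L :: "real mat" and bv :: "real vec"
    and x :: "nat \<Rightarrow> real vec"
    and s :: "nat \<Rightarrow> nat \<Rightarrow> nat" and u :: "nat \<Rightarrow> nat" and s_hat :: nat
  assumes bs_pos: "0 < bs"
    and div: "bs dvd n"
    and L_dim: "L \<in> carrier_mat n n"
    and bv_dim: "bv \<in> carrier_vec n"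
    and L_lbt: "lower_block_triangular bs L"
    and diag_nonsing: "\<forall>I < n div bs. invertible_mat (diag_block bs L I)"
    and shift_bound: "\<forall>\<alpha> < n. \<forall>j \<ge> 1. s \<alpha> j \<le> min (j - 1) s_hat"
    and u_range: "\<forall>j \<ge> 1. u j < n div bs"
    and u_inf: "\<forall>i < n div bs. \<forall>j \<ge> 1. \<exists>l > j. u l = i"
    and x_init: "x 1 \<in> carrier_vec n"
    and x_step: "\<forall>j \<ge> 1. x (Suc j) = vec n (\<lambda>\<alpha>.
                    if \<alpha> div bs = u j
                    then psi bs L bv (vec n (\<lambda>\<beta>. x (j - s \<beta> j) $ \<beta>)) $ \<alpha>
                    else x j $ \<alpha>)"
  shows "\<exists>J \<ge> 1. \<forall>j \<ge> J. x j = mat_inv L *\<^sub>v bv"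
proof -
  define y where "y = mat_inv L *\<^sub>v bv"
  have L_inv: "invertible_mat L"
    using lower_block_triangular_invertible[OF div L_dim L_lbt diag_nonsing] .
  have y: "y \<in> carrier_vec n"
    using mat_inv_right_inverse(1)[OF L_dim L_inv] bv_dim by (simp add: y_def)
  have Ly: "L *\<^sub>v y = bv"
    using mult_mat_vec_mat_inv[OF L_dim L_inv bv_dim] by (simp add: y_def)
  have F_block: "psi bs L bv z $ k = y $ k"
    if "I < n div bs" "z \<in> carrier_vec n" "\<forall>k'<n. k' div bs < I \<longrightarrow> z $ k' = y $ k'"
      "k < n" "k div bs = I" for I z k
    using psi_block_eq_solution[OF div L_dim L_lbt diag_nonsing y Ly that] .
  have shift: "s \<alpha> j \<le> s_hat" if "\<alpha> < n" "1 \<le> j" for \<alpha> j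
    using shift_bound that by (meson min.bounded_iff)
  have iter: "async_block_iteration n bs (psi bs L bv) s u x"
    using x_step unfolding async_block_iteration_def .
  have "\<exists>J \<ge> 1. \<forall>j \<ge> J. x j = y"
    by (rule async_block_iteration_eventually_eq[OF div F_block shift u_inf iter x_init y])
  then show ?thesis by (simp add: y_def)
qed

end
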